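(* Let $\nu>0$, let $U$ be the gamma process with parameter $\nu$ and $V(t)=\inf\{\tau\ge0: U(\tau)>t\}$. Then for every $q>0$, $$\mathbb{E}\big(V(t)^q\big)\sim (\nu t)^q\quad\text{as } t\to\infty .$$
   Context: The gamma process with parameter $\nu>0$ is the Lévy process $\{U(t),t\ge0\}$ with $U(0)=0$, stationary independent increments, and $U(t)$ having density $f(x,t)=\frac{1}{\Gamma(t/\nu)}x^{t/\nu-1}e^{-x}$, $x>0$; its Laplace exponent is $\Psi_U(u)=\frac1\nu\log(1+u)$. The inverse gamma process is $V(t)=\inf\{\tau\ge 0: U(\tau)>t\}$. *)

theory Defs
  imports "HOL-Probability.Probability" "HOL-Library.Landau_Symbols"
begin

definition gamma_density :: "real \<Rightarrow> real \<Rightarrow> real \<Rightarrow> real" where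
  "gamma_density \<nu> t x =
     (if 0 < x then x powr (t / \<nu> - 1) * exp (- x) / Gamma (t / \<nu>) else 0)"

definition gamma_process :: "'a measure \<Rightarrow> real \<Rightarrow> (real \<Rightarrow> 'a \<Rightarrow> real) \<Rightarrow> bool" where
  "gamma_process M \<nu> U \<longleftrightarrow>
     prob_space M \<and> 0 < \<nu> \<and>
     (\<forall>t. U t \<in> borel_measurable M) \<and>
     (AE \<omega> in M. U 0 \<omega> = 0) \<and>
     (\<forall>\<omega>\<in>space M. \<forall>s\<ge>0. continuous (at_right s) (\<lambda>\<tau>. U \<tau> \<omega>)) \<and>
     (\<forall>\<omega>\<in>space M. \<forall>s>0. \<exists>l. ((\<lambda>\<tau>. U \<tau> \<omega>) \<longlongrightarrow> l) (at_left s)) \<and>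
     (\<forall>(n::nat) (ts::nat \<Rightarrow> real). 0 \<le> ts 0 \<longrightarrow> (\<forall>i<n. ts i < ts (Suc i)) \<longrightarrow>
        prob_space.indep_vars M (\<lambda>_. borel) (\<lambda>i \<omega>. U (ts (Suc i)) \<omega> - U (ts i) \<omega>) {..<n}) \<and>
     (\<forall>s h. 0 \<le> s \<longrightarrow> 0 \<le> h \<longrightarrow>
        distr M borel (\<lambda>\<omega>. U (s + h) \<omega> - U s \<omega>) = distr M borel (U h)) \<and>
     (\<forall>t>0. distributed M lborel (U t) (\<lambda>x. ennreal (gamma_density \<nu> t x)))"

definition inverse_process :: "(real \<Rightarrow> 'a \<Rightarrow> real) \<Rightarrow> real \<Rightarrow> 'a \<Rightarrow> real" where
  "inverse_process U t \<omega> = Inf {\<tau>. 0 \<le> \<tau> \<and> t < U \<tau> \<omega>}"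

end

theory Submission
  imports Defs "HOL-Real_Asymp.Real_Asymp"
begin

text \<open>The Laplace transform \<open>E exp (s U(\<tau>)) = (1 - s) powr (-\<tau>/\<nu>)\<close> gives Chernoff bounds
  showing that \<open>U(c \<nu> t)\<close> concentrates at \<open>c t\<close>: the probability of \<open>U(c \<nu> t) \<le> t\<close> decays
  exponentially in \<open>t\<close> for \<open>c > 1\<close>, and so does that of \<open>U(c \<nu> t) > t\<close> for \<open>c < 1\<close>.
  Since \<open>V(t) > s\<close> forces \<open>U(s) \<le> t\<close>, and (the paths being a.s. nondecreasing and
  right-continuous) \<open>U(s) \<le> t\<close> forces \<open>V(t) \<ge> s\<close>, one gets for fixed \<open>0 < \<epsilon> < 1\<close>
  \<open>((1 - \<epsilon>) \<nu> t)\<^sup>q (1 - exp (-\<phi> t)) \<le> E V(t)\<^sup>q \<le> ((1 + \<epsilon>) \<nu> t)\<^sup>q + (\<nu> t)\<^sup>q exp (-\<delta> t) K\<close>,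
  the upper bound by summing over the shells \<open>(1 + \<epsilon> + k) \<nu> t < V(t) \<le> (2 + \<epsilon> + k) \<nu> t\<close>.
  Letting \<open>\<epsilon> \<rightarrow> 0\<close> gives the asymptotics.\<close>

lemma nn_integral_powr_exp:
  fixes a b :: real
  assumes a: "0 < a" and b: "0 < b"
  shows "(\<integral>\<^sup>+x. ennreal (if 0 < x then x powr (a - 1) * exp (-(b * x)) else 0) \<partial>lborel)
         = ennreal (Gamma a * b powr (-a))"
proof -
  define g where "g y = (if 0 < y then y powr (a - 1) * exp (- y) else 0)" for y :: real
  have g_measurable[measurable]: "g \<in> borel_measurable borel" unfolding g_def by measurable
  have "((\<lambda>y. if y \<in> {0..} then y powr (a - 1) / exp y else 0) has_integral Gamma a) UNIV"
    using Gamma_integral_real[OF a] by (simp only: has_integral_restrict_UNIV)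
  moreover have "(\<lambda>y. if y \<in> {0..} then y powr (a - 1) / exp y else 0) = g"
    by (auto simp: g_def fun_eq_iff exp_minus field_simps)
  ultimately have g_integral: "(g has_integral Gamma a) UNIV" by simp
  define J where "J = (\<integral>\<^sup>+x. ennreal (if 0 < x then x powr (a - 1) * exp (-(b * x)) else 0) \<partial>lborel)"
  have "ennreal (Gamma a) = (\<integral>\<^sup>+x. ennreal (g x) \<partial>lborel)"
    by (rule nn_integral_has_integral_lborel[OF g_measurable _ g_integral, symmetric]) (simp add: g_def)
  also have "\<dots> = ennreal b * (\<integral>\<^sup>+x. ennreal (g (0 + b * x)) \<partial>lborel)"
    using b by (subst nn_integral_real_affine[of _ b 0]) auto
  also have "(\<integral>\<^sup>+x. ennreal (g (0 + b * x)) \<partial>lborel) = ennreal (b powr (a - 1)) * J"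
    unfolding J_def using b
    by (subst nn_integral_cmult[symmetric]) (auto simp: g_def powr_mult zero_less_mult_iff ennreal_mult mult.assoc intro!: nn_integral_cong)
  also have "ennreal b * (ennreal (b powr (a - 1)) * J) = ennreal (b powr a) * J"
    using b by (simp add: ennreal_mult[symmetric] mult.assoc[symmetric] powr_diff)
  finally have "ennreal (b powr (-a)) * ennreal (Gamma a) = ennreal (b powr (-a) * b powr a) * J"
    using b by (simp add: ennreal_mult mult.assoc)
  then show ?thesis
    using a b by (simp add: J_def ennreal_mult less_imp_le mult.commute powr_minus)
qed

lemma emeasure_le_exp_nn_integral:
  assumes [measurable]: "Y \<in> borel_measurable M"
  shows "emeasure M {\<omega>\<in>space M. c \<le> Y \<omega>} \<le> ennreal (exp (- c)) * (\<integral>\<^sup>+\<omega>. ennreal (exp (Y \<omega>)) \<partial>M)"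
proof -
  have "{\<omega>\<in>space M. c \<le> Y \<omega>} = {\<omega>\<in>space M. 1 \<le> ennreal (exp (- c)) * ennreal (exp (Y \<omega>))}"
    by (auto simp: ennreal_mult[symmetric] exp_add[symmetric])
  also have "emeasure M \<dots> \<le> ennreal (exp (- c)) * (\<integral>\<^sup>+\<omega>. ennreal (exp (Y \<omega>)) * indicator (space M) \<omega> \<partial>M)"
    by (rule nn_integral_Markov_inequality) auto
  also have "(\<integral>\<^sup>+\<omega>. ennreal (exp (Y \<omega>)) * indicator (space M) \<omega> \<partial>M)
      = (\<integral>\<^sup>+\<omega>. ennreal (exp (Y \<omega>)) \<partial>M)"
    by (intro nn_integral_cong) auto
  finally show ?thesis .
qed

lemma summable_powr_mult_exp:
  fixes a q c :: real
  assumes "0 < c"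
  shows "summable (\<lambda>k::nat. (a + real k) powr q * exp (- (c * real k)))"
proof (rule summable_comparison_test_bigo)
  show "summable (\<lambda>k::nat. norm (inverse (real k ^ 2)))"
    using inverse_power_summable[of 2, where ?'a = real] by simp
  show "(\<lambda>k::nat. (a + real k) powr q * exp (- (c * real k))) \<in> O(\<lambda>k. inverse (real k ^ 2))"
    using assms by real_asymp
qed

lemma tendsto_squeeze_family:
  fixes r :: "'b \<Rightarrow> real" and a b :: "real \<Rightarrow> real"
  assumes a: "(a \<longlongrightarrow> c) (at_right 0)" and b: "(b \<longlongrightarrow> c) (at_right 0)"
    and bounds: "\<And>\<epsilon>. 0 < \<epsilon> \<Longrightarrow> \<epsilon> < 1 \<Longrightarrow> \<exists>lo hi. (lo \<longlongrightarrow> a \<epsilon>) F \<and> (hi \<longlongrightarrow> b \<epsilon>) F \<and>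
        (\<forall>\<^sub>F x in F. lo x \<le> r x \<and> r x \<le> hi x)"
  shows "(r \<longlongrightarrow> c) F"
proof (rule tendstoI)
  fix e :: real assume e: "0 < e"
  have "\<forall>\<^sub>F \<epsilon> in at_right 0. \<epsilon> < (1::real)"
    unfolding eventually_at_right_field by (intro exI[of _ 1]) auto
  moreover have "\<forall>\<^sub>F \<epsilon> in at_right 0. c - e/2 < a \<epsilon>" "\<forall>\<^sub>F \<epsilon> in at_right 0. b \<epsilon> < c + e/2"
    using order_tendstoD(1)[OF a] order_tendstoD(2)[OF b] e by auto
  ultimately have "\<forall>\<^sub>F \<epsilon> in at_right 0. 0 < \<epsilon> \<and> \<epsilon> < 1 \<and> c - e/2 < a \<epsilon> \<and> b \<epsilon> < c + e/2"
    using eventually_at_right_less[of 0] by eventually_elim auto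
  then obtain \<epsilon> where \<epsilon>: "0 < \<epsilon>" "\<epsilon> < 1" "c - e/2 < a \<epsilon>" "b \<epsilon> < c + e/2"
    using eventually_happens[of _ "at_right (0::real)"] by auto
  obtain lo hi where lo: "(lo \<longlongrightarrow> a \<epsilon>) F" and hi: "(hi \<longlongrightarrow> b \<epsilon>) F"
    and squeeze: "\<forall>\<^sub>F x in F. lo x \<le> r x \<and> r x \<le> hi x"
    using bounds[OF \<epsilon>(1,2)] by blast
  have "\<forall>\<^sub>F x in F. c - e < lo x" "\<forall>\<^sub>F x in F. hi x < c + e"
    using order_tendstoD(1)[OF lo] order_tendstoD(2)[OF hi] \<epsilon> e by auto
  with squeeze show "\<forall>\<^sub>F x in F. dist (r x) c < e"
    by eventually_elim (auto simp: dist_real_def abs_less_iff)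
qed

lemma asymp_equiv_by_squeeze_family:
  fixes f g :: "'b \<Rightarrow> real" and a b :: "real \<Rightarrow> real"
  assumes "(a \<longlongrightarrow> 1) (at_right 0)" and "(b \<longlongrightarrow> 1) (at_right 0)"
    and g_pos: "\<forall>\<^sub>F x in F. 0 < g x"
    and bounds: "\<And>\<epsilon>. 0 < \<epsilon> \<Longrightarrow> \<epsilon> < 1 \<Longrightarrow> \<exists>lo hi. (lo \<longlongrightarrow> a \<epsilon>) F \<and> (hi \<longlongrightarrow> b \<epsilon>) F \<and>
        (\<forall>\<^sub>F x in F. g x * lo x \<le> f x \<and> f x \<le> g x * hi x)"
  shows "f \<sim>[F] g"
proof (rule asymp_equivI')
  show "((\<lambda>x. f x / g x) \<longlongrightarrow> 1) F"
  proof (rule tendsto_squeeze_family[OF assms(1,2)])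
    fix \<epsilon> :: real assume "0 < \<epsilon>" "\<epsilon> < 1"
    then obtain lo hi where "(lo \<longlongrightarrow> a \<epsilon>) F" "(hi \<longlongrightarrow> b \<epsilon>) F"
      and "\<forall>\<^sub>F x in F. g x * lo x \<le> f x \<and> f x \<le> g x * hi x"
      using bounds by blast
    moreover from this(3) g_pos have "\<forall>\<^sub>F x in F. lo x \<le> f x / g x \<and> f x / g x \<le> hi x"
      by eventually_elim (auto simp: pos_le_divide_eq pos_divide_le_eq mult.commute)
    ultimately show "\<exists>lo hi. (lo \<longlongrightarrow> a \<epsilon>) F \<and> (hi \<longlongrightarrow> b \<epsilon>) F \<and>
        (\<forall>\<^sub>F x in F. lo x \<le> f x / g x \<and> f x / g x \<le> hi x)"
      by blast
  qed
qed

lemma ennreal_powr_le_shell_sum: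
  fixes v a c q :: real
  assumes v: "0 \<le> v" and c: "0 < c" and q: "0 \<le> q"
  shows "ennreal (v powr q) \<le> ennreal ((a * c) powr q) +
           (\<Sum>k. ennreal (((a + 1 + real k) * c) powr q) * indicator {(a + real k) * c<..} v)"
    (is "_ \<le> _ + (\<Sum>k. ?shell k)")
proof (cases "v \<le> a * c")
  case True
  then have "ennreal (v powr q) \<le> ennreal ((a * c) powr q)"
    using v q by (intro ennreal_leI powr_mono2) auto
  then show ?thesis by (simp add: add_increasing2)
next
  case False
  define k where "k = nat (\<lceil>v / c - a\<rceil> - 1)"
  have "a < v / c"
    using False c by (simp add: pos_less_divide_eq not_le)
  then have "real k = real_of_int \<lceil>v / c - a\<rceil> - 1"
    by (simp add: k_def)
  then have "a + real k < v / c" "v / c \<le> a + 1 + real k"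
    by linarith+
  then have k: "(a + real k) * c < v" "v \<le> (a + 1 + real k) * c"
    using c by (simp_all add: pos_less_divide_eq pos_divide_le_eq)
  have "ennreal (v powr q) \<le> ?shell k"
    using k v q by (auto intro!: ennreal_leI powr_mono2)
  also have "\<dots> \<le> (\<Sum>k. ?shell k)"
    using sum_le_suminf[OF summableI, of "{k}" ?shell]
    by (simp only: sum.insert sum.empty finite.intros empty_iff add_0_right zero_le simp_thms)
  finally show ?thesis by (simp add: add_increasing)
qed

lemma half_lt_mult_ln_one_plus_half:
  fixes \<epsilon> :: real
  assumes "0 < \<epsilon>" "\<epsilon> < 1"
  shows "\<epsilon> / 2 < (1 + \<epsilon>) * ln (1 + \<epsilon> / 2)"
proof -
  have "(1 + \<epsilon>) * (\<epsilon> / 2 - (\<epsilon> / 2)\<^sup>2) \<le> (1 + \<epsilon>) * ln (1 + \<epsilon> / 2)"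
    using assms by (intro mult_left_mono ln_one_plus_pos_lower_bound) auto
  moreover have "(1 + \<epsilon>) * (\<epsilon> / 2 - (\<epsilon> / 2)\<^sup>2) = \<epsilon> / 2 + \<epsilon>\<^sup>2 * (1 - \<epsilon>) / 4"
    by (simp add: power2_eq_square field_simps)
  moreover have "0 < \<epsilon>\<^sup>2 * (1 - \<epsilon>) / 4"
    using assms by simp
  ultimately show ?thesis by linarith
qed

lemma neg_half_lt_mult_ln_one_minus_half:
  fixes \<epsilon> :: real
  assumes "0 < \<epsilon>" "\<epsilon> < 1"
  shows "- (\<epsilon> / 2) < (1 - \<epsilon>) * ln (1 - \<epsilon> / 2)"
proof -
  have "(1 - \<epsilon>) * (- (\<epsilon> / 2) - 2 * (\<epsilon> / 2)\<^sup>2) \<le> (1 - \<epsilon>) * ln (1 - \<epsilon> / 2)"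
    using assms by (intro mult_left_mono ln_one_minus_pos_lower_bound) auto
  moreover have "(1 - \<epsilon>) * (- (\<epsilon> / 2) - 2 * (\<epsilon> / 2)\<^sup>2) = - (\<epsilon> / 2) + \<epsilon> ^ 3 / 2"
    by (simp add: power2_eq_square power3_eq_cube field_simps)
  moreover have "0 < \<epsilon> ^ 3 / 2"
    using assms by simp
  ultimately show ?thesis by linarith
qed

lemma inverse_process_le:
  assumes "0 \<le> \<tau>" "t < U \<tau> \<omega>"
  shows "inverse_process U t \<omega> \<le> \<tau>"
  unfolding inverse_process_def using assms by (intro cInf_lower bdd_belowI[of _ 0]) auto

lemma inverse_process_nonneg:
  assumes "0 \<le> \<tau>" "t < U \<tau> \<omega>"
  shows "0 \<le> inverse_process U t \<omega>"
  unfolding inverse_process_def using assms by (intro cInf_greatest) auto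

locale gamma_proc =
  fixes M :: "'a measure" and \<nu> :: real and U :: "real \<Rightarrow> 'a \<Rightarrow> real"
  assumes gamma_process: "gamma_process M \<nu> U"
begin

sublocale prob_space M
  using gamma_process by (simp add: gamma_process_def)

lemma nu_pos: "0 < \<nu>"
  using gamma_process by (simp add: gamma_process_def)

lemma borel_measurable_U [measurable]: "U \<tau> \<in> borel_measurable M"
  using gamma_process by (simp add: gamma_process_def)

lemma distributed_U: "0 < \<tau> \<Longrightarrow> distributed M lborel (U \<tau>) (\<lambda>x. ennreal (gamma_density \<nu> \<tau> x))"
  using gamma_process by (simp add: gamma_process_def)

lemma distr_increment_U:
  "0 \<le> s \<Longrightarrow> 0 \<le> h \<Longrightarrow> distr M borel (\<lambda>\<omega>. U (s + h) \<omega> - U s \<omega>) = distr M borel (U h)"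
  using gamma_process unfolding gamma_process_def by blast

lemma continuous_at_right_U: "\<omega> \<in> space M \<Longrightarrow> 0 \<le> s \<Longrightarrow> continuous (at_right s) (\<lambda>\<tau>. U \<tau> \<omega>)"
  using gamma_process unfolding gamma_process_def by blast

lemma nn_integral_exp_U:
  assumes "0 < \<tau>" "s < 1"
  shows "(\<integral>\<^sup>+\<omega>. ennreal (exp (s * U \<tau> \<omega>)) \<partial>M) = ennreal ((1 - s) powr (-(\<tau> / \<nu>)))"
proof -
  define a where "a = \<tau> / \<nu>"
  have a: "0 < a" using assms nu_pos by (simp add: a_def)
  have G: "0 < Gamma a" using a by simp
  have "(\<integral>\<^sup>+\<omega>. ennreal (exp (s * U \<tau> \<omega>)) \<partial>M)
      = (\<integral>\<^sup>+x. ennreal (gamma_density \<nu> \<tau> x) * ennreal (exp (s * x)) \<partial>lborel)"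
    by (subst distributed_nn_integral[OF distributed_U[OF assms(1)], of "\<lambda>x. ennreal (exp (s * x))"]) auto
  also have "\<dots> = (\<integral>\<^sup>+x. ennreal (if 0 < x then x powr (a - 1) * exp (-((1 - s) * x)) else 0)
                      * ennreal (1 / Gamma a) \<partial>lborel)"
    using G by (intro nn_integral_cong)
      (auto simp: gamma_density_def a_def ennreal_mult[symmetric] exp_add[symmetric] algebra_simps)
  also have "\<dots> = ennreal (Gamma a * (1 - s) powr (-a)) * ennreal (1 / Gamma a)"
    using nn_integral_powr_exp[OF a, of "1 - s"] assms by (simp add: nn_integral_multc)
  also have "\<dots> = ennreal ((1 - s) powr (-a))"
    using G by (simp add: ennreal_mult[symmetric])
  finally show ?thesis by (simp add: a_def)
qed

lemma prob_U_le:
  assumes "0 < \<tau>" "0 \<le> l"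
  shows "prob {\<omega>\<in>space M. U \<tau> \<omega> \<le> x} \<le> exp (l * x) * (1 + l) powr (-(\<tau> / \<nu>))"
proof -
  have "emeasure M {\<omega>\<in>space M. U \<tau> \<omega> \<le> x} \<le> emeasure M {\<omega>\<in>space M. - (l * x) \<le> - l * U \<tau> \<omega>}"
    using assms by (intro emeasure_mono) (auto intro: mult_left_mono)
  also have "\<dots> \<le> ennreal (exp (l * x)) * ennreal ((1 + l) powr (-(\<tau> / \<nu>)))"
    using emeasure_le_exp_nn_integral[of "\<lambda>\<omega>. - l * U \<tau> \<omega>" M "- (l * x)"]
      nn_integral_exp_U[OF assms(1), of "- l"] assms by simp
  finally show ?thesis
    by (simp add: emeasure_eq_measure ennreal_mult[symmetric])
qed

lemma prob_U_greater:
  assumes "0 < \<tau>" "0 \<le> l" "l < 1"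
  shows "prob {\<omega>\<in>space M. x < U \<tau> \<omega>} \<le> exp (- (l * x)) * (1 - l) powr (-(\<tau> / \<nu>))"
proof -
  have "emeasure M {\<omega>\<in>space M. x < U \<tau> \<omega>} \<le> emeasure M {\<omega>\<in>space M. l * x \<le> l * U \<tau> \<omega>}"
    using assms by (intro emeasure_mono) (auto intro: mult_left_mono)
  also have "\<dots> \<le> ennreal (exp (- (l * x))) * ennreal ((1 - l) powr (-(\<tau> / \<nu>)))"
    using emeasure_le_exp_nn_integral[of "\<lambda>\<omega>. l * U \<tau> \<omega>" M "l * x"]
      nn_integral_exp_U[OF assms(1,3)] by simp
  finally show ?thesis
    by (simp add: emeasure_eq_measure ennreal_mult[symmetric])
qed

lemma AE_U_le_U:
  assumes "0 \<le> r" "r < \<tau>"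
  shows "AE \<omega> in M. U r \<omega> \<le> U \<tau> \<omega>"
proof -
  define h where "h = \<tau> - r"
  have h: "0 < h" using assms by (simp add: h_def)
  have "emeasure M {\<omega>\<in>space M. U \<tau> \<omega> - U r \<omega> < 0}
      = emeasure (distr M borel (\<lambda>\<omega>. U (r + h) \<omega> - U r \<omega>)) {..<0}"
    by (subst emeasure_distr) (auto simp: h_def vimage_def Int_def conj_commute)
  also have "\<dots> = emeasure (distr M borel (U h)) {..<0}"
    using assms h by (simp add: distr_increment_U)
  also have "\<dots> = (\<integral>\<^sup>+x. ennreal (gamma_density \<nu> h x) * indicator {..<0} x \<partial>lborel)"
    by (subst emeasure_distr) (auto intro: distributed_emeasure[OF distributed_U[OF h]])
  also have "\<dots> = 0"
    by (subst nn_integral_0_iff_AE) (auto simp: gamma_density_def indicator_def)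
  finally show ?thesis
    by (intro AE_I[of _ _ "{\<omega>\<in>space M. U \<tau> \<omega> - U r \<omega> < 0}"]) auto
qed

lemma AE_U_unbounded: "AE \<omega> in M. \<exists>n::nat. t < U (real n) \<omega>"
proof -
  define N where "N = {\<omega>\<in>space M. \<forall>n::nat. U (real n) \<omega> \<le> t}"
  have N_sets [measurable]: "N \<in> sets M" unfolding N_def by measurable
  have bound: "prob N \<le> exp t * 2 powr (- (real n / \<nu>))" if "1 \<le> n" for n
  proof -
    have "prob N \<le> prob {\<omega>\<in>space M. U (real n) \<omega> \<le> t}"
      by (intro finite_measure_mono) (auto simp: N_def)
    also have "\<dots> \<le> exp t * 2 powr (- (real n / \<nu>))"
      using prob_U_le[of "real n" 1 t] that by simp
    finally show ?thesis .
  qed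
  have "(\<lambda>n::nat. exp t * 2 powr (- (real n / \<nu>))) \<longlonglongrightarrow> 0"
    using nu_pos by real_asymp
  then have "prob N \<le> 0"
    by (rule LIMSEQ_le_const) (use bound in \<open>auto intro!: exI[of _ 1]\<close>)
  then have "emeasure M N = 0"
    by (simp add: emeasure_eq_measure measure_le_0_iff)
  then show ?thesis
    by (intro AE_I[of _ _ N]) (auto simp: N_def not_less)
qed

lemma AE_U_mono_rat:
  "AE \<omega> in M. \<forall>r::rat. 0 \<le> real_of_rat r \<and> real_of_rat r < \<tau> \<longrightarrow> U (real_of_rat r) \<omega> \<le> U \<tau> \<omega>"
  by (subst AE_all_countable) (auto intro: AE_U_le_U)

text \<open>By right-continuity, rational times witness every crossing of a level \<open>t\<close>. This makes
  \<open>V\<close> measurable and lets a.s. monotonicity at rational times suffice.\<close>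

lemma exists_rat_U_greater:
  assumes "\<omega> \<in> space M" "0 \<le> \<sigma>" "t < U \<sigma> \<omega>" "\<sigma> < b"
  shows "\<exists>r::rat. \<sigma> < real_of_rat r \<and> real_of_rat r < b \<and> t < U (real_of_rat r) \<omega>"
proof -
  have "\<forall>\<^sub>F \<tau> in at_right \<sigma>. t < U \<tau> \<omega>"
    using continuous_at_right_U[OF assms(1,2)] assms(3) by (auto simp: continuous_within intro: order_tendstoD)
  then obtain c where c: "\<sigma> < c" "\<And>\<tau>. \<sigma> < \<tau> \<Longrightarrow> \<tau> < c \<Longrightarrow> t < U \<tau> \<omega>"
    unfolding eventually_at_right_field by blast
  obtain x where "x \<in> \<rat>" "\<sigma> < x" "x < min c b"
    using Rats_dense_in_real[of \<sigma> "min c b"] c assms by auto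
  then show ?thesis
    using c by (auto elim!: Rats_cases)
qed

lemma inverse_process_less_iff:
  assumes "\<omega> \<in> space M" "0 \<le> \<sigma>" "t < U \<sigma> \<omega>"
  shows "inverse_process U t \<omega> < a \<longleftrightarrow> (\<exists>r::rat. 0 \<le> real_of_rat r \<and> real_of_rat r < a \<and> t < U (real_of_rat r) \<omega>)"
proof -
  define S where "S = {\<tau>. 0 \<le> \<tau> \<and> t < U \<tau> \<omega>}"
  have "S \<noteq> {}" "bdd_below S"
    using assms by (auto simp: S_def intro: bdd_belowI[of _ 0])
  then have "inverse_process U t \<omega> < a \<longleftrightarrow> (\<exists>\<tau>\<in>S. \<tau> < a)"
    unfolding inverse_process_def S_def[symmetric] by (rule cInf_less_iff)
  also have "\<dots> \<longleftrightarrow> (\<exists>r::rat. 0 \<le> real_of_rat r \<and> real_of_rat r < a \<and> t < U (real_of_rat r) \<omega>)"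
  proof
    assume "\<exists>\<tau>\<in>S. \<tau> < a"
    then obtain \<tau> where "0 \<le> \<tau>" "t < U \<tau> \<omega>" "\<tau> < a" by (auto simp: S_def)
    then show "\<exists>r::rat. 0 \<le> real_of_rat r \<and> real_of_rat r < a \<and> t < U (real_of_rat r) \<omega>"
      using exists_rat_U_greater[OF assms(1)] by (smt (verit))
  qed (unfold S_def, blast)
  finally show ?thesis .
qed

lemma borel_measurable_inverse_process [measurable]:
  "(\<lambda>\<omega>. inverse_process U t \<omega>) \<in> borel_measurable M"
  unfolding borel_measurable_iff_less
proof
  fix a :: real
  \<comment> \<open>On paths that never exceed \<open>t\<close>, \<open>V\<close> is the unspecified real \<open>Inf {}\<close>.\<close>
  define hits where "hits \<omega> \<longleftrightarrow> (\<exists>r::rat. 0 \<le> real_of_rat r \<and> t < U (real_of_rat r) \<omega>)" for \<omega>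
  have "{\<omega>\<in>space M. inverse_process U t \<omega> < a}
      = {\<omega>\<in>space M. (\<not> hits \<omega> \<and> Inf ({} :: real set) < a)
           \<or> (\<exists>r::rat. 0 \<le> real_of_rat r \<and> real_of_rat r < a \<and> t < U (real_of_rat r) \<omega>)}"
  proof (intro Collect_cong conj_cong refl)
    fix \<omega> assume \<omega>: "\<omega> \<in> space M"
    show "inverse_process U t \<omega> < a \<longleftrightarrow> (\<not> hits \<omega> \<and> Inf {} < a)
        \<or> (\<exists>r::rat. 0 \<le> real_of_rat r \<and> real_of_rat r < a \<and> t < U (real_of_rat r) \<omega>)"
    proof (cases "\<exists>\<sigma>\<ge>0. t < U \<sigma> \<omega>")
      case True
      then obtain \<sigma> where \<sigma>: "0 \<le> \<sigma>" "t < U \<sigma> \<omega>" by blast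
      then obtain r :: rat where r: "\<sigma> < real_of_rat r" "t < U (real_of_rat r) \<omega>"
        using exists_rat_U_greater[OF \<omega>, of \<sigma> t "\<sigma> + 1"] by auto
      moreover have "0 \<le> real_of_rat r"
        using \<sigma> r by linarith
      ultimately have "hits \<omega>"
        unfolding hits_def by blast
      then show ?thesis
        using inverse_process_less_iff[OF \<omega> \<sigma>] by blast
    next
      case False
      then have "{\<tau>. 0 \<le> \<tau> \<and> t < U \<tau> \<omega>} = {}"
        by blast
      then have "inverse_process U t \<omega> = Inf {}"
        by (simp only: inverse_process_def)
      with False show ?thesis unfolding hits_def by (metis not_less)
    qed
  qed
  also have "\<dots> \<in> sets M"
    unfolding hits_def by measurable
  finally show "{\<omega>\<in>space M. inverse_process U t \<omega> < a} \<in> sets M" .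
qed

lemma AE_inverse_process_nonneg: "AE \<omega> in M. 0 \<le> inverse_process U t \<omega>"
  using AE_U_unbounded[of t] by eventually_elim (metis inverse_process_nonneg of_nat_0_le_iff)

lemma AE_le_inverse_process:
  assumes "0 < \<tau>"
  shows "AE \<omega> in M. U \<tau> \<omega> \<le> t \<longrightarrow> \<tau> \<le> inverse_process U t \<omega>"
  using AE_U_mono_rat[of \<tau>] AE_U_unbounded[of t] AE_space
proof eventually_elim
  case (elim \<omega>)
  show ?case
  proof
    assume "U \<tau> \<omega> \<le> t"
    show "\<tau> \<le> inverse_process U t \<omega>"
      unfolding inverse_process_def
    proof (rule cInf_greatest)
      show "{\<sigma>. 0 \<le> \<sigma> \<and> t < U \<sigma> \<omega>} \<noteq> {}"
        using elim of_nat_0_le_iff by blast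
    next
      fix \<sigma> assume \<sigma>: "\<sigma> \<in> {\<sigma>. 0 \<le> \<sigma> \<and> t < U \<sigma> \<omega>}"
      show "\<tau> \<le> \<sigma>"
      proof (rule ccontr)
        assume "\<not> \<tau> \<le> \<sigma>"
        then obtain r :: rat where r: "\<sigma> < real_of_rat r" "real_of_rat r < \<tau>" "t < U (real_of_rat r) \<omega>"
          using exists_rat_U_greater[of \<omega> \<sigma> t \<tau>] \<sigma> elim by auto
        moreover have "0 \<le> real_of_rat r"
          using \<sigma> r(1) by (simp only: mem_Collect_eq) linarith
        ultimately have "U (real_of_rat r) \<omega> \<le> U \<tau> \<omega>"
          using elim by blast
        then show False
          using r \<open>U \<tau> \<omega> \<le> t\<close> by simp
      qed
    qed
  qed
qed

lemma emeasure_inverse_process_greater_le: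
  assumes "0 < t" "0 < c" "0 \<le> l"
  shows "emeasure M {\<omega>\<in>space M. c * \<nu> * t < inverse_process U t \<omega>}
           \<le> ennreal (exp (- ((c * ln (1 + l) - l) * t)))"
proof -
  have "0 \<le> c * \<nu> * t"
    using assms nu_pos by simp
  then have "{\<omega>\<in>space M. c * \<nu> * t < inverse_process U t \<omega>} \<subseteq> {\<omega>\<in>space M. U (c * \<nu> * t) \<omega> \<le> t}"
    using inverse_process_le[of "c * \<nu> * t" t U] by (auto simp: not_less[symmetric])
  then have "emeasure M {\<omega>\<in>space M. c * \<nu> * t < inverse_process U t \<omega>}
      \<le> ennreal (prob {\<omega>\<in>space M. U (c * \<nu> * t) \<omega> \<le> t})"
    by (simp add: emeasure_eq_measure[symmetric] emeasure_mono)
  also have "prob {\<omega>\<in>space M. U (c * \<nu> * t) \<omega> \<le> t} \<le> exp (l * t) * (1 + l) powr (-(c * \<nu> * t / \<nu>))"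
    using assms nu_pos by (intro prob_U_le) auto
  also have "\<dots> = exp (- ((c * ln (1 + l) - l) * t))"
    using assms nu_pos by (simp add: powr_def exp_add[symmetric] algebra_simps)
  finally show ?thesis by (simp add: ennreal_leI)
qed

lemma emeasure_inverse_process_greater_shift_le:
  assumes "1 \<le> t" "0 < c" "0 \<le> l"
  shows "emeasure M {\<omega>\<in>space M. (c + real k) * (\<nu> * t) < inverse_process U t \<omega>}
           \<le> ennreal (exp (- ((c * ln (1 + l) - l) * t)) * exp (- (ln (1 + l) * real k)))"
proof -
  have "emeasure M {\<omega>\<in>space M. (c + real k) * (\<nu> * t) < inverse_process U t \<omega>}
      \<le> ennreal (exp (- (((c + real k) * ln (1 + l) - l) * t)))"
    using emeasure_inverse_process_greater_le[of t "c + real k" l] assms by (simp add: mult.assoc)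
  also have "\<dots> \<le> ennreal (exp (- ((c * ln (1 + l) - l) * t)) * exp (- (ln (1 + l) * real k)))"
  proof (rule ennreal_leI)
    have "ln (1 + l) * real k \<le> ln (1 + l) * real k * t"
      using mult_left_mono[of 1 t "ln (1 + l) * real k"] assms by simp
    then show "exp (- (((c + real k) * ln (1 + l) - l) * t))
        \<le> exp (- ((c * ln (1 + l) - l) * t)) * exp (- (ln (1 + l) * real k))"
      by (simp add: exp_add[symmetric] algebra_simps)
  qed
  finally show ?thesis .
qed

lemma nn_integral_inverse_process_powr_le_shells:
  assumes "0 < c" "0 \<le> q"
  shows "(\<integral>\<^sup>+\<omega>. ennreal (inverse_process U t \<omega> powr q) \<partial>M)
    \<le> ennreal ((a * c) powr q) + (\<Sum>k. ennreal (((a + 1 + real k) * c) powr q)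
          * emeasure M {\<omega>\<in>space M. (a + real k) * c < inverse_process U t \<omega>})"
proof -
  have "(\<integral>\<^sup>+\<omega>. ennreal (inverse_process U t \<omega> powr q) \<partial>M)
      \<le> (\<integral>\<^sup>+\<omega>. ennreal ((a * c) powr q) + (\<Sum>k. ennreal (((a + 1 + real k) * c) powr q)
          * indicator {(a + real k) * c<..} (inverse_process U t \<omega>)) \<partial>M)"
    using AE_inverse_process_nonneg[of t]
    by (intro nn_integral_mono_AE, eventually_elim) (rule ennreal_powr_le_shell_sum, use assms in auto)
  also have "\<dots> = ennreal ((a * c) powr q) + (\<Sum>k. \<integral>\<^sup>+\<omega>. ennreal (((a + 1 + real k) * c) powr q)
          * indicator {(a + real k) * c<..} (inverse_process U t \<omega>) \<partial>M)"
    by (subst nn_integral_add) (auto simp: nn_integral_suminf emeasure_space_1)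
  also have "(\<Sum>k. \<integral>\<^sup>+\<omega>. ennreal (((a + 1 + real k) * c) powr q)
          * indicator {(a + real k) * c<..} (inverse_process U t \<omega>) \<partial>M)
      = (\<Sum>k. ennreal (((a + 1 + real k) * c) powr q)
          * emeasure M {\<omega>\<in>space M. (a + real k) * c < inverse_process U t \<omega>})"
    by (intro suminf_cong, subst nn_integral_cmult_indicator[symmetric])
      (auto intro!: nn_integral_cong simp: indicator_def)
  finally show ?thesis .
qed

lemma nn_integral_inverse_process_powr_le:
  assumes \<epsilon>: "0 < \<epsilon>" "\<epsilon> < 1" and q: "0 < q"
  obtains \<delta> K where "0 < \<delta>" "0 \<le> K" "\<And>t. 1 \<le> t \<Longrightarrow>
    (\<integral>\<^sup>+\<omega>. ennreal (inverse_process U t \<omega> powr q) \<partial>M)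
      \<le> ennreal ((\<nu> * t) powr q * ((1 + \<epsilon>) powr q + exp (- (\<delta> * t)) * K))"
proof
  define ll where "ll = ln (1 + \<epsilon> / 2)"
  define \<delta> where "\<delta> = (1 + \<epsilon>) * ll - \<epsilon> / 2"
  define a where "a k = (1 + \<epsilon> + 1 + real k) powr q * exp (- (ll * real k))" for k :: nat
  have ll: "0 < ll" using \<epsilon> by (simp add: ll_def)
  have a: "summable a"
    unfolding a_def by (rule summable_powr_mult_exp[OF ll])
  show "0 < \<delta>"
    using half_lt_mult_ln_one_plus_half[OF \<epsilon>] by (simp add: \<delta>_def ll_def)
  show K: "0 \<le> suminf a"
    by (rule suminf_nonneg[OF a]) (simp add: a_def)
  fix t :: real assume t: "1 \<le> t"
  define T where "T = \<nu> * t"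
  have T: "0 < T" using nu_pos t by (simp add: T_def)
  have "(\<integral>\<^sup>+\<omega>. ennreal (inverse_process U t \<omega> powr q) \<partial>M)
      \<le> ennreal (((1 + \<epsilon>) * T) powr q) + (\<Sum>k. ennreal (((1 + \<epsilon> + 1 + real k) * T) powr q)
          * emeasure M {\<omega>\<in>space M. (1 + \<epsilon> + real k) * T < inverse_process U t \<omega>})"
    using T q by (intro nn_integral_inverse_process_powr_le_shells) auto
  also have "(\<Sum>k. ennreal (((1 + \<epsilon> + 1 + real k) * T) powr q)
          * emeasure M {\<omega>\<in>space M. (1 + \<epsilon> + real k) * T < inverse_process U t \<omega>})
      \<le> (\<Sum>k. ennreal (T powr q * exp (- (\<delta> * t)) * a k))"
  proof (intro suminf_le allI)
    fix k :: nat
    have "ennreal (((1 + \<epsilon> + 1 + real k) * T) powr q)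
          * emeasure M {\<omega>\<in>space M. (1 + \<epsilon> + real k) * T < inverse_process U t \<omega>}
        \<le> ennreal (((1 + \<epsilon> + 1 + real k) * T) powr q) * ennreal (exp (- (\<delta> * t)) * exp (- (ll * real k)))"
      using emeasure_inverse_process_greater_shift_le[of t "1 + \<epsilon>" "\<epsilon> / 2" k] t \<epsilon>
      by (intro mult_left_mono) (simp_all add: T_def \<delta>_def ll_def)
    also have "\<dots> = ennreal (T powr q * exp (- (\<delta> * t)) * a k)"
      using T \<epsilon> by (simp add: a_def powr_mult ennreal_mult[symmetric] ac_simps)
    finally show "ennreal (((1 + \<epsilon> + 1 + real k) * T) powr q)
          * emeasure M {\<omega>\<in>space M. (1 + \<epsilon> + real k) * T < inverse_process U t \<omega>}
        \<le> ennreal (T powr q * exp (- (\<delta> * t)) * a k)" .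
  qed auto
  also have "(\<Sum>k. ennreal (T powr q * exp (- (\<delta> * t)) * a k)) = ennreal (T powr q * exp (- (\<delta> * t)) * suminf a)"
  proof -
    have "(\<Sum>k. ennreal (T powr q * exp (- (\<delta> * t)) * a k)) = ennreal (\<Sum>k. T powr q * exp (- (\<delta> * t)) * a k)"
      by (intro suminf_ennreal2 summable_mult a) (simp add: a_def)
    then show ?thesis
      by (simp only: suminf_mult[OF a])
  qed
  also have "ennreal (((1 + \<epsilon>) * T) powr q) + ennreal (T powr q * exp (- (\<delta> * t)) * suminf a)
      = ennreal (T powr q * ((1 + \<epsilon>) powr q + exp (- (\<delta> * t)) * suminf a))"
  proof -
    have "ennreal (((1 + \<epsilon>) * T) powr q) + ennreal (T powr q * exp (- (\<delta> * t)) * suminf a)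
        = ennreal (((1 + \<epsilon>) * T) powr q + T powr q * exp (- (\<delta> * t)) * suminf a)"
      using K by (intro ennreal_plus[symmetric]) auto
    moreover have "((1 + \<epsilon>) * T) powr q = (1 + \<epsilon>) powr q * T powr q"
      using T \<epsilon> by (simp add: powr_mult)
    ultimately show ?thesis
      by (simp only: distrib_left mult_ac)
  qed
  finally show "(\<integral>\<^sup>+\<omega>. ennreal (inverse_process U t \<omega> powr q) \<partial>M)
      \<le> ennreal ((\<nu> * t) powr q * ((1 + \<epsilon>) powr q + exp (- (\<delta> * t)) * suminf a))"
    by (simp add: T_def add_left_mono)
qed

lemma prob_U_le_ge:
  assumes "0 < t" "0 < c" "0 \<le> l" "l < 1"
  shows "1 - exp (- ((l + c * ln (1 - l)) * t)) \<le> prob {\<omega>\<in>space M. U (c * \<nu> * t) \<omega> \<le> t}"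
proof -
  have "prob {\<omega>\<in>space M. t < U (c * \<nu> * t) \<omega>} \<le> exp (- (l * t)) * (1 - l) powr (-(c * \<nu> * t / \<nu>))"
    using assms nu_pos by (intro prob_U_greater) auto
  also have "\<dots> = exp (- ((l + c * ln (1 - l)) * t))"
    using assms nu_pos by (simp add: powr_def exp_add[symmetric] algebra_simps)
  moreover have "space M - {\<omega>\<in>space M. t < U (c * \<nu> * t) \<omega>} = {\<omega>\<in>space M. U (c * \<nu> * t) \<omega> \<le> t}"
    by auto
  ultimately show ?thesis
    using prob_compl[of "{\<omega>\<in>space M. t < U (c * \<nu> * t) \<omega>}"] by simp
qed

lemma nn_integral_inverse_process_powr_ge:
  assumes \<epsilon>: "0 < \<epsilon>" "\<epsilon> < 1" and q: "0 < q"
  obtains \<phi> where "0 < \<phi>" "\<And>t. 0 < t \<Longrightarrow>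
    ennreal ((\<nu> * t) powr q * ((1 - \<epsilon>) powr q * (1 - exp (- (\<phi> * t)))))
      \<le> (\<integral>\<^sup>+\<omega>. ennreal (inverse_process U t \<omega> powr q) \<partial>M)"
proof
  define \<phi> where "\<phi> = \<epsilon> / 2 + (1 - \<epsilon>) * ln (1 - \<epsilon> / 2)"
  show "0 < \<phi>"
    using neg_half_lt_mult_ln_one_minus_half[OF \<epsilon>] by (simp add: \<phi>_def)
  fix t :: real assume t: "0 < t"
  define \<tau> where "\<tau> = (1 - \<epsilon>) * \<nu> * t"
  define F where "F = {\<omega>\<in>space M. U \<tau> \<omega> \<le> t}"
  have \<tau>: "0 < \<tau>" using \<epsilon> t nu_pos by (simp add: \<tau>_def)
  have F [measurable]: "F \<in> sets M" unfolding F_def by measurable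
  have "ennreal ((\<nu> * t) powr q * ((1 - \<epsilon>) powr q * (1 - exp (- (\<phi> * t)))))
      \<le> ennreal (\<tau> powr q * prob F)"
  proof (intro ennreal_leI)
    have "1 - exp (- (\<phi> * t)) \<le> prob F"
      using prob_U_le_ge[OF t, of "1 - \<epsilon>" "\<epsilon> / 2"] \<epsilon> unfolding F_def \<tau>_def \<phi>_def by simp
    then have "\<tau> powr q * (1 - exp (- (\<phi> * t))) \<le> \<tau> powr q * prob F"
      by (rule mult_left_mono) simp
    moreover have "\<tau> powr q = (\<nu> * t) powr q * (1 - \<epsilon>) powr q"
      unfolding \<tau>_def using \<epsilon> t nu_pos by (subst powr_mult[symmetric]) (simp_all add: ac_simps)
    ultimately show "(\<nu> * t) powr q * ((1 - \<epsilon>) powr q * (1 - exp (- (\<phi> * t)))) \<le> \<tau> powr q * prob F"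
      by (simp add: mult.assoc)
  qed
  also have "\<dots> = (\<integral>\<^sup>+\<omega>. ennreal (\<tau> powr q) * indicator F \<omega> \<partial>M)"
    by (simp add: nn_integral_cmult_indicator emeasure_eq_measure ennreal_mult)
  also have "\<dots> \<le> (\<integral>\<^sup>+\<omega>. ennreal (inverse_process U t \<omega> powr q) \<partial>M)"
  proof (rule nn_integral_mono_AE)
    show "AE \<omega> in M. ennreal (\<tau> powr q) * indicator F \<omega> \<le> ennreal (inverse_process U t \<omega> powr q)"
      using AE_le_inverse_process[OF \<tau>, of t]
    proof eventually_elim
      case (elim \<omega>)
      show ?case
      proof (cases "\<omega> \<in> F")
        case True
        then have "\<tau> powr q \<le> inverse_process U t \<omega> powr q"
          using elim \<tau> q by (intro powr_mono2) (auto simp: F_def)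
        with True show ?thesis by (simp add: ennreal_leI)
      qed simp
    qed
  qed
  finally show "ennreal ((\<nu> * t) powr q * ((1 - \<epsilon>) powr q * (1 - exp (- (\<phi> * t)))))
      \<le> (\<integral>\<^sup>+\<omega>. ennreal (inverse_process U t \<omega> powr q) \<partial>M)" .
qed

lemma integrable_inverse_process_powr:
  assumes "1 \<le> t" "0 < q"
  shows "integrable M (\<lambda>\<omega>. inverse_process U t \<omega> powr q)"
proof (rule integrableI_bounded)
  obtain \<delta> K where "0 < \<delta>" "0 \<le> K" and bound: "\<And>t. 1 \<le> t \<Longrightarrow>
      (\<integral>\<^sup>+\<omega>. ennreal (inverse_process U t \<omega> powr q) \<partial>M)
      \<le> ennreal ((\<nu> * t) powr q * ((1 + 1/2) powr q + exp (- (\<delta> * t)) * K))"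
    by (rule nn_integral_inverse_process_powr_le[of "1/2" q]) (use assms(2) in auto)
  show "(\<integral>\<^sup>+\<omega>. ennreal (norm (inverse_process U t \<omega> powr q)) \<partial>M) < \<infinity>"
    using bound[OF assms(1)] by (simp add: le_less_trans)
qed simp

lemma integral_inverse_process_powr_squeeze:
  assumes \<epsilon>: "0 < \<epsilon>" "\<epsilon> < 1" and q: "0 < q"
  shows "\<exists>lo hi. (lo \<longlongrightarrow> (1 - \<epsilon>) powr q) at_top \<and> (hi \<longlongrightarrow> (1 + \<epsilon>) powr q) at_top \<and>
    (\<forall>\<^sub>F t in at_top. (\<nu> * t) powr q * lo t \<le> integral\<^sup>L M (\<lambda>\<omega>. inverse_process U t \<omega> powr q)
                     \<and> integral\<^sup>L M (\<lambda>\<omega>. inverse_process U t \<omega> powr q) \<le> (\<nu> * t) powr q * hi t)"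
proof -
  obtain \<delta> K where \<delta>: "0 < \<delta>" "0 \<le> K" and upper: "\<And>t. 1 \<le> t \<Longrightarrow>
      (\<integral>\<^sup>+\<omega>. ennreal (inverse_process U t \<omega> powr q) \<partial>M)
        \<le> ennreal ((\<nu> * t) powr q * ((1 + \<epsilon>) powr q + exp (- (\<delta> * t)) * K))"
    using nn_integral_inverse_process_powr_le[OF \<epsilon> q] by blast
  obtain \<phi> where \<phi>: "0 < \<phi>" and lower: "\<And>t. 0 < t \<Longrightarrow>
      ennreal ((\<nu> * t) powr q * ((1 - \<epsilon>) powr q * (1 - exp (- (\<phi> * t)))))
        \<le> (\<integral>\<^sup>+\<omega>. ennreal (inverse_process U t \<omega> powr q) \<partial>M)"
    using nn_integral_inverse_process_powr_ge[OF \<epsilon> q] by blast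
  have "((\<lambda>t. (1 - \<epsilon>) powr q * (1 - exp (- (\<phi> * t)))) \<longlongrightarrow> (1 - \<epsilon>) powr q) at_top"
    using \<phi> by real_asymp
  moreover have "((\<lambda>t. (1 + \<epsilon>) powr q + exp (- (\<delta> * t)) * K) \<longlongrightarrow> (1 + \<epsilon>) powr q) at_top"
    using \<delta> by real_asymp
  moreover have "\<forall>\<^sub>F t in at_top. (\<nu> * t) powr q * ((1 - \<epsilon>) powr q * (1 - exp (- (\<phi> * t))))
        \<le> integral\<^sup>L M (\<lambda>\<omega>. inverse_process U t \<omega> powr q)
      \<and> integral\<^sup>L M (\<lambda>\<omega>. inverse_process U t \<omega> powr q)
        \<le> (\<nu> * t) powr q * ((1 + \<epsilon>) powr q + exp (- (\<delta> * t)) * K)"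
    using eventually_ge_at_top[of 1]
  proof eventually_elim
    case (elim t)
    have "(\<integral>\<^sup>+\<omega>. ennreal (inverse_process U t \<omega> powr q) \<partial>M)
        = ennreal (integral\<^sup>L M (\<lambda>\<omega>. inverse_process U t \<omega> powr q))"
      using elim q by (intro nn_integral_eq_integral integrable_inverse_process_powr) auto
    moreover have "0 \<le> integral\<^sup>L M (\<lambda>\<omega>. inverse_process U t \<omega> powr q)"
      by simp
    ultimately show ?case
      using upper[OF elim] lower[of t] elim \<delta>(2) by (simp add: ennreal_le_iff)
  qed
  ultimately show ?thesis
    by blast
qed

end

theorem mainTheorem4:
  fixes M :: "'a measure" and U :: "real \<Rightarrow> 'a \<Rightarrow> real" and \<nu> q :: real
  assumes "0 < \<nu>"
    and "gamma_process M \<nu> U"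
    and "0 < q"
  shows "(\<lambda>t. integral\<^sup>L M (\<lambda>\<omega>. inverse_process U t \<omega> powr q)) \<sim>[at_top] (\<lambda>t. (\<nu> * t) powr q)"
proof -
  interpret gamma_proc M \<nu> U
    using assms(2) by unfold_locales
  show ?thesis
  proof (rule asymp_equiv_by_squeeze_family
      [where a = "\<lambda>\<epsilon>. (1 - \<epsilon>) powr q" and b = "\<lambda>\<epsilon>. (1 + \<epsilon>) powr q"])
    show "((\<lambda>\<epsilon>. (1 - \<epsilon>) powr q) \<longlongrightarrow> 1) (at_right 0)"
      by real_asymp
    show "((\<lambda>\<epsilon>. (1 + \<epsilon>) powr q) \<longlongrightarrow> 1) (at_right 0)"
      by real_asymp
    show "\<forall>\<^sub>F t in at_top. 0 < (\<nu> * t) powr q"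
      using eventually_gt_at_top[of 0] by eventually_elim (use assms(1) in simp)
  qed (use integral_inverse_process_powr_squeeze assms(3) in blast)
qed

end
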